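(* Let $(x_t)_{t=1}^T$ be a sequence with $x_t>0$ for all $t$. Then for any $\alpha\in[0,1]$, $$\sum_{t=1}^T\frac{x_t^{1-\alpha}}{\sqrt{1+\sum_{s=1}^t x_s^{1-2\alpha}}}\le\mathcal{O}\Big(\sqrt{\Big(\sum_{t=1}^Tx_t\Big)\log\Big(1+\sum_{t=1}^Tx_t^{1-2\alpha}\Big)}\Big).$$
   Context: $\mathcal{O}(\cdot)$ hides an absolute constant (independent of $T$, $\alpha$ and the sequence). *)

theory Defs
  imports Complex_Main
begin

end

theory Submission
  imports Defs "HOL-Analysis.Convex"
begin

text \<open>
  Write \<open>a t = x t powr (1 - 2 * \<alpha>)\<close> and \<open>S t = a 1 + \<dots> + a t\<close>. Each summand equals
  \<open>sqrt (x t) * sqrt (a t / (1 + S t))\<close>, so by Cauchy-Schwarz the sum is at most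
  \<open>sqrt ((\<Sum>t. x t) * (\<Sum>t. a t / (1 + S t)))\<close>. The second factor is at most
  \<open>ln (1 + S T)\<close>, because \<open>a t / (1 + S t) \<le> ln (1 + S t) - ln (1 + S (t - 1))\<close> and the
  right-hand sides telescope.
\<close>

lemma frac_le_ln_add_diff:
  fixes p a :: real
  assumes "0 < p" "0 \<le> a"
  shows "a / (p + a) \<le> ln (p + a) - ln p"
proof -
  have pa: "0 < p + a" using assms by linarith
  have "ln (p / (p + a)) \<le> p / (p + a) - 1"
    using assms pa by (intro ln_le_minus_one) simp
  also have "\<dots> = - (a / (p + a))"
    using pa by (simp add: field_simps)
  finally show ?thesis
    using assms pa by (simp add: ln_divide_pos)
qed

lemma sum_div_one_plus_partial_sums_le_ln:
  fixes a :: "nat \<Rightarrow> real"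
  assumes "\<And>t. t \<in> {1..T} \<Longrightarrow> 0 \<le> a t"
  shows "(\<Sum>t=1..T. a t / (1 + (\<Sum>s=1..t. a s))) \<le> ln (1 + (\<Sum>t=1..T. a t))"
  using assms
proof (induction T)
  case 0
  then show ?case by simp
next
  case (Suc T)
  let ?S = "\<Sum>t=1..T. a t"
  have "0 \<le> ?S" "0 \<le> a (Suc T)"
    using Suc.prems by (auto intro: sum_nonneg)
  then have "a (Suc T) / (1 + ?S + a (Suc T)) \<le> ln (1 + ?S + a (Suc T)) - ln (1 + ?S)"
    by (intro frac_le_ln_add_diff) auto
  moreover have "(\<Sum>t=1..T. a t / (1 + (\<Sum>s=1..t. a s))) \<le> ln (1 + ?S)"
    using Suc by simp
  ultimately show ?case
    by (simp add: add.assoc)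
qed

lemma sum_sqrt_mult_le:
  fixes u v :: "'a \<Rightarrow> real"
  assumes "\<And>i. i \<in> I \<Longrightarrow> 0 \<le> u i" "\<And>i. i \<in> I \<Longrightarrow> 0 \<le> v i"
  shows "(\<Sum>i\<in>I. sqrt (u i * v i)) \<le> sqrt ((\<Sum>i\<in>I. u i) * (\<Sum>i\<in>I. v i))"
proof -
  have "(\<Sum>i\<in>I. sqrt (u i * v i)) = (\<Sum>i\<in>I. sqrt (u i) * sqrt (v i))"
    by (simp add: real_sqrt_mult)
  also have "\<dots> \<le> sqrt ((\<Sum>i\<in>I. (sqrt (u i))\<^sup>2) * (\<Sum>i\<in>I. (sqrt (v i))\<^sup>2))"
    by (rule real_le_rsqrt [OF Cauchy_Schwarz_ineq_sum])
  also have "\<dots> = sqrt ((\<Sum>i\<in>I. u i) * (\<Sum>i\<in>I. v i))"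
    using assms by simp
  finally show ?thesis .
qed

lemma powr_one_minus_eq_sqrt:
  fixes x \<alpha> :: real
  assumes "0 < x"
  shows "x powr (1 - \<alpha>) = sqrt (x * x powr (1 - 2 * \<alpha>))"
proof -
  have "x * x powr (1 - 2 * \<alpha>) = x powr (1 - \<alpha>) * x powr (1 - \<alpha>)"
    using assms by (simp add: powr_mult_base flip: powr_add)
  then show ?thesis
    by simp
qed

theorem lemma2:
  shows "\<exists>C::real. \<forall>(T::nat) (x::nat \<Rightarrow> real) (\<alpha>::real).
    (\<forall>t\<in>{1..T}. x t > 0) \<longrightarrow> 0 \<le> \<alpha> \<longrightarrow> \<alpha> \<le> 1 \<longrightarrow>
    (\<Sum>t=1..T. x t powr (1 - \<alpha>) / sqrt (1 + (\<Sum>s=1..t. x s powr (1 - 2*\<alpha>))))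
      \<le> C * sqrt ((\<Sum>t=1..T. x t) * ln (1 + (\<Sum>t=1..T. x t powr (1 - 2*\<alpha>))))"
proof (intro exI [of _ 1] allI impI)
  fix T :: nat and x :: "nat \<Rightarrow> real" and \<alpha> :: real
  assume pos: "\<forall>t\<in>{1..T}. x t > 0"
  define a where "a t = x t powr (1 - 2 * \<alpha>)" for t
  define S where "S t = (\<Sum>s=1..t. a s)" for t
  have a_nonneg: "0 \<le> a t" for t
    by (simp add: a_def)
  have S_nonneg: "0 \<le> S t" for t
    by (simp add: S_def a_nonneg sum_nonneg)
  have summand_eq: "x t powr (1 - \<alpha>) / sqrt (1 + S t) = sqrt (x t * (a t / (1 + S t)))"
    if "t \<in> {1..T}" for t
    using pos that by (simp add: a_def powr_one_minus_eq_sqrt [of "x t" \<alpha>] real_sqrt_divide)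
  have "(\<Sum>t=1..T. x t powr (1 - \<alpha>) / sqrt (1 + S t)) = (\<Sum>t=1..T. sqrt (x t * (a t / (1 + S t))))"
    using summand_eq by (rule sum.cong [OF refl])
  also have "\<dots> \<le> sqrt ((\<Sum>t=1..T. x t) * (\<Sum>t=1..T. a t / (1 + S t)))"
    using pos a_nonneg S_nonneg by (intro sum_sqrt_mult_le) (auto intro: less_imp_le)
  also have "\<dots> \<le> sqrt ((\<Sum>t=1..T. x t) * ln (1 + S T))"
    using pos a_nonneg unfolding S_def
    by (intro real_sqrt_le_mono mult_left_mono sum_div_one_plus_partial_sums_le_ln sum_nonneg)
      (auto intro: less_imp_le)
  finally show "(\<Sum>t=1..T. x t powr (1 - \<alpha>) / sqrt (1 + (\<Sum>s=1..t. x s powr (1 - 2*\<alpha>))))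
      \<le> 1 * sqrt ((\<Sum>t=1..T. x t) * ln (1 + (\<Sum>t=1..T. x t powr (1 - 2*\<alpha>))))"
    by (simp add: S_def a_def)
qed

end
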